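(* Let $s,t,z$ be positive integers and put $\theta'=t(2s-1)$, $\tau=\theta'-ts-t$, $p=\min\{\lfloor\frac{z-1}{ts-t}\rfloor,t-1\}$ and $p'=\min\{\lfloor\frac{z-1}{\tau-z+1}\rfloor,t-1\}$. Define the coded exponent sets $$\mathbf{P}(C_A)=\{i+tj: i\in\{0,\dots,t-1\},\ j\in\{0,\dots,s-1\}\},\qquad \mathbf{P}(C_B)=\{t(s-1-k)+\theta' l: k\in\{0,\dots,s-1\},\ l\in\{0,\dots,t-1\}\}.$$ Define the secret exponent set $\mathbf{P}(S_A)$ by: - if $z>ts-t$ and $s,t\neq 1$: $\mathbf{P}(S_A)=\{ts+\theta' l+w: l\in\{0,\dots,p-1\},\ w\in\{0,\dots,t(s-1)-1\}\}\cup\{ts+\theta' p+u: u\in\{0,\dots,z-1-pt(s-1)\}\}$; - if $z\le ts-t$ or $t=1$ or $s=1$: $\mathbf{P}(S_A)=\{ts+\theta' p+u: u\in\{0,\dots,z-1\}\}$. Define the secret exponent set $\mathbf{P}(S_B)$ by: - if $z>\tau$ or $t=1$ or $s=1$: $\mathbf{P}(S_B)=\{ts+\theta'(t-1)+r: r\in\{0,\dots,z-1\}\}$; - if $\frac{\tau+1}{2}<z\le\tau$ and $s,t\neq1$: $\mathbf{P}(S_B)=\{ts+\theta' l'+d: d\in\{0,\dots,\tau-z\},\ l'\in\{0,\dots,p'-1\}\}\cup\{ts+\theta' p'+v: v\in\{0,\dots,z-1-p'(\tau-z+1)\}\}$; - if $z\le\frac{\tau+1}{2}$ and $s,t\neq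 1$: $\mathbf{P}(S_B)=\{ts+v: v\in\{0,\dots,z-1\}\}$. Then for all $i,l\in\{0,\dots,t-1\}$, the integer $i+t(s-1)+tl(2s-1)$ belongs to none of the sumsets $\mathbf{P}(S_A)+\mathbf{P}(C_B)$, $\mathbf{P}(S_A)+\mathbf{P}(S_B)$, $\mathbf{P}(S_B)+\mathbf{P}(C_A)$.
   Context: For integer sets $\mathbf{I},\mathbf{J}$, $\mathbf{I}+\mathbf{J}=\{i+j:i\in\mathbf{I},j\in\mathbf{J}\}$. These sets are the sets of exponents with nonzero coefficient of the polynomials of the PolyDot-CMPC scheme for privately computing $Y=A^TB$ for $m\times m$ matrices $A,B$ over a finite field split into $s$ row-wise and $t$ column-wise blocks: source 1 forms $F_A(x)=C_A(x)+S_A(x)$ with $C_A(x)=\sum_{i=0}^{t-1}\sum_{j=0}^{s-1}A_{i,j}x^{i+tj}$ (blocks $A_{i,j}$ of $A^T$) and $S_A(x)$ the sum of independent uniformly random matrices $\bar A$ times $x^e$ for $e\in\mathbf{P}(S_A)$; source 2 forms $F_B(x)=C_B(x)+S_B(x)$ with $C_B(x)=\sum_{k=0}^{s-1}\sum_{l=0}^{t-1}B_{k,l}x^{t(s-1-k)+\theta' l}$ and $S_B(x)$ likewise a sum of uniformly random matrices times $x^e$, $e\in\mathbf{P}(S_B)$. The exponents $i+t(s-1)+tl(2s-1)$ are those whose coefficients in $C_A(x)C_B(x)$ are the blocks $Y_{i,l}=\sum_j A_{i,j}B_{j,l}$ of $Y$; $z$ is the number of colluding workers. When $s=1$ (so $ts-t=0$)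 the paper takes $p=t-1$. *)

theory Defs
  imports Main
begin

definition setplus :: "int set \<Rightarrow> int set \<Rightarrow> int set" where
  "setplus I J = {i + j | i j. i \<in> I \<and> j \<in> J}"

definition thetap :: "int \<Rightarrow> int \<Rightarrow> int" where
  "thetap s t = t * (2 * s - 1)"

definition tau :: "int \<Rightarrow> int \<Rightarrow> int" where
  "tau s t = thetap s t - t * s - t"

text \<open>p; when s = 1 (so ts - t = 0) the paper takes p = t - 1.\<close>
definition pA :: "int \<Rightarrow> int \<Rightarrow> int \<Rightarrow> int" where
  "pA s t z = (if t * s - t = 0 then t - 1 else min ((z - 1) div (t * s - t)) (t - 1))"

definition pB :: "int \<Rightarrow> int \<Rightarrow> int \<Rightarrow> int" where
  "pB s t z = min ((z - 1) div (tau s t - z + 1)) (t - 1)"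

definition PCA :: "int \<Rightarrow> int \<Rightarrow> int set" where
  "PCA s t = {i + t * j | i j. i \<in> {0..t-1} \<and> j \<in> {0..s-1}}"

definition PCB :: "int \<Rightarrow> int \<Rightarrow> int set" where
  "PCB s t = {t * (s - 1 - k) + thetap s t * l | k l. k \<in> {0..s-1} \<and> l \<in> {0..t-1}}"

definition PSA :: "int \<Rightarrow> int \<Rightarrow> int \<Rightarrow> int set" where
  "PSA s t z = (if z > t * s - t \<and> s \<noteq> 1 \<and> t \<noteq> 1 then
      {t * s + thetap s t * l + w | l w. l \<in> {0..pA s t z - 1} \<and> w \<in> {0..t * (s - 1) - 1}}
      \<union> {t * s + thetap s t * pA s t z + u | u. u \<in> {0..z - 1 - pA s t z * t * (s - 1)}}
    else {t * s + thetap s t * pA s t z + u | u. u \<in> {0..z - 1}})"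

definition PSB :: "int \<Rightarrow> int \<Rightarrow> int \<Rightarrow> int set" where
  "PSB s t z = (if z > tau s t \<or> t = 1 \<or> s = 1 then
      {t * s + thetap s t * (t - 1) + r | r. r \<in> {0..z - 1}}
    else if tau s t + 1 < 2 * z then
      {t * s + thetap s t * l' + d | d l'. d \<in> {0..tau s t - z} \<and> l' \<in> {0..pB s t z - 1}}
      \<union> {t * s + thetap s t * pB s t z + v | v. v \<in> {0..z - 1 - pB s t z * (tau s t - z + 1)}}
    else {t * s + v | v. v \<in> {0..z - 1}})"

end

theory Submission
  imports Defs
begin

text \<open>
  Write every exponent in base \<open>\<theta>' = 2ts - t\<close>: the target exponent is
  \<open>(ts - t + i) + \<theta>' l\<close> with digit \<open>ts - t + i < \<theta>'\<close>, whereas every element of the three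
  sumsets is \<open>r' + \<theta>' l'\<close> with \<open>r' > ts - t + i\<close>. Equality therefore forces a carry:
  \<open>l' < l \<le> t - 1\<close> and \<open>r' \<ge> ts - t + i + \<theta>'\<close>. But \<open>l' < t - 1\<close> excludes the top block of
  \<open>\<^bold>P(S\<^sub>A)\<close> resp. \<open>\<^bold>P(S\<^sub>B)\<close>, the only block on which the secret offset can reach
  \<open>ts - t\<close> resp. exceed \<open>\<tau> - z\<close>; off that block the offsets are too small for the carry.
\<close>

lemma offset_lt_imp_carry:
  fixes T r r' k k' :: int
  assumes "0 < T" and "r + T * k = r' + T * k'" and "r < r'"
  shows "k' < k" and "r + T \<le> r'"
proof -
  have diff: "r' - r = T * (k - k')"
    using assms(2) by (simp add: algebra_simps)
  then have "0 < T * (k - k')"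
    using assms(3) by simp
  then have "1 \<le> k - k'"
    using assms(1) by (simp add: zero_less_mult_iff)
  then show "k' < k" by simp
  have "T * 1 \<le> T * (k - k')"
    using \<open>1 \<le> k - k'\<close> assms(1) by (intro mult_left_mono) auto
  then show "r + T \<le> r'"
    using diff by simp
qed

lemma min_div_eq_or_remainder_lt:
  fixes c n M :: int
  assumes "0 < n"
  shows "min (c div n) M = M \<or> c - min (c div n) M * n < n"
proof (cases "c div n \<le> M")
  case True
  then have "c - min (c div n) M * n = c mod n"
    by (simp add: minus_div_mult_eq_mod)
  then show ?thesis
    using assms by simp
qed simp

lemma thetap_eq: "thetap s t = 2 * (t * s) - t"
  by (simp add: thetap_def algebra_simps)

lemma thetap_pos:
  fixes s t :: int
  assumes "1 \<le> s" and "1 \<le> t"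
  shows "0 < thetap s t"
  using assms by (simp add: thetap_def)

lemma tau_eq: "tau s t = t * s - 2 * t"
  by (simp add: tau_def thetap_def algebra_simps)

lemma mem_setplusE:
  assumes "x \<in> setplus I J"
  obtains y y' where "y \<in> I" and "y' \<in> J" and "x = y + y'"
  using assms unfolding setplus_def by blast

lemma pA_bounds:
  fixes s t z :: int
  assumes "1 \<le> s" and "1 \<le> t" and "1 \<le> z"
  shows "0 \<le> pA s t z" and "pA s t z \<le> t - 1"
  using assms by (auto simp: pA_def pos_imp_zdiv_nonneg_iff)

lemma pA_remainder_lt:
  fixes s t z :: int
  assumes "1 \<le> s" and "1 \<le> t"
  shows "pA s t z = t - 1 \<or> z - 1 - pA s t z * (t * s - t) < t * s - t"
proof (cases "t * s - t = 0")
  case False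
  have "t * s - t = t * (s - 1)"
    by (simp add: algebra_simps)
  moreover have "0 \<le> t * (s - 1)"
    using assms by simp
  ultimately have "0 < t * s - t"
    using False by linarith
  then show ?thesis
    using False min_div_eq_or_remainder_lt[of "t * s - t" "z - 1" "t - 1"]
    by (simp add: pA_def)
qed (simp add: pA_def)

lemma pB_nonneg:
  fixes s t z :: int
  assumes "1 \<le> t" and "1 \<le> z" and "z \<le> tau s t"
  shows "0 \<le> pB s t z"
  using assms by (simp add: pB_def pos_imp_zdiv_nonneg_iff)

lemma pB_remainder_lt:
  fixes s t z :: int
  assumes "z \<le> tau s t"
  shows "pB s t z = t - 1 \<or> z - 1 - pB s t z * (tau s t - z + 1) < tau s t - z + 1"
  using assms min_div_eq_or_remainder_lt[of "tau s t - z + 1" "z - 1" "t - 1"]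
  by (simp add: pB_def)

lemma PCA_bounds:
  fixes s t y :: int
  assumes "1 \<le> t" and "y \<in> PCA s t"
  shows "0 \<le> y" and "y < t * s"
proof -
  obtain i j where y: "y = i + t * j" and i: "i \<in> {0..t-1}" and j: "j \<in> {0..s-1}"
    using assms(2) unfolding PCA_def by blast
  have "t * j \<le> t * (s - 1)"
    using j assms(1) by (intro mult_left_mono) auto
  then show "0 \<le> y" and "y < t * s"
    using y i j assms(1) by (auto simp: algebra_simps)
qed

lemma PCB_memE:
  fixes s t y :: int
  assumes "1 \<le> t" and "y \<in> PCB s t"
  obtains m k where "y = m + thetap s t * k" and "0 \<le> m" and "m \<le> t * s - t" and "0 \<le> k"
proof -
  obtain j k where y: "y = t * (s - 1 - j) + thetap s t * k"
    and j: "j \<in> {0..s-1}" and k: "k \<in> {0..t-1}"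
    using assms(2) unfolding PCB_def by blast
  have "t * (s - 1 - j) \<le> t * (s - 1)"
    using j assms(1) by (intro mult_left_mono) auto
  moreover have "0 \<le> t * (s - 1 - j)"
    using j assms(1) by simp
  ultimately show thesis
    using that[OF y] k by (simp add: algebra_simps)
qed

lemma PSA_memE:
  fixes s t z y :: int
  assumes "1 \<le> s" and "1 \<le> t" and "1 \<le> z" and "y \<in> PSA s t z"
  obtains a w where "y = t * s + thetap s t * a + w" and "0 \<le> a" and "0 \<le> w" and "w < z"
    and "w < t * s - t \<or> a = t - 1"
proof -
  let ?p = "pA s t z"
  have p: "0 \<le> ?p" "?p \<le> t - 1"
    using pA_bounds assms(1-3) by auto
  have ts: "t * (s - 1) = t * s - t"
    by (simp add: algebra_simps)
  show thesis
  proof (cases "z > t * s - t \<and> s \<noteq> 1 \<and> t \<noteq> 1")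
    case True
    consider (full) a w where "y = t * s + thetap s t * a + w"
        "a \<in> {0..?p - 1}" "w \<in> {0..t * (s - 1) - 1}"
      | (last) u where "y = t * s + thetap s t * ?p + u"
        "u \<in> {0..z - 1 - ?p * t * (s - 1)}"
      using assms(4) True unfolding PSA_def by auto
    then show thesis
    proof cases
      case full
      then show thesis
        using that True ts by auto
    next
      case last
      have "0 \<le> ?p * t * (s - 1)"
        using p assms(1,2) by simp
      then show thesis
        using that[OF last(1)] last(2) p pA_remainder_lt[OF assms(1,2), of z]
        by (auto simp: ts mult.assoc)
    qed
  next
    case False
    then obtain u where y: "y = t * s + thetap s t * ?p + u" and u: "u \<in> {0..z - 1}"
      using assms(4) unfolding PSA_def by auto
    have "u < t * s - t \<or> ?p = t - 1"
      using False u p by (auto simp: pA_def)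
    then show thesis
      using that[OF y] u p by auto
  qed
qed

lemma PSB_memE:
  fixes s t z y :: int
  assumes "1 \<le> t" and "1 \<le> z" and "y \<in> PSB s t z"
  obtains b d where "y = t * s + thetap s t * b + d" and "0 \<le> b" and "0 \<le> d"
    and "b = t - 1 \<or> d \<le> tau s t - z"
proof -
  let ?p = "pB s t z"
  consider (top) "z > tau s t \<or> t = 1 \<or> s = 1"
    | (spread) "\<not> (z > tau s t \<or> t = 1 \<or> s = 1)" "tau s t + 1 < 2 * z"
    | (bottom) "\<not> (z > tau s t \<or> t = 1 \<or> s = 1)" "\<not> tau s t + 1 < 2 * z"
    by blast
  then show thesis
  proof cases
    case top
    then obtain r where "y = t * s + thetap s t * (t - 1) + r" and "r \<in> {0..z - 1}"
      using assms(3) unfolding PSB_def by auto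
    then show thesis
      using that assms(1) by auto
  next
    case spread
    have p: "0 \<le> ?p" "?p = t - 1 \<or> z - 1 - ?p * (tau s t - z + 1) < tau s t - z + 1"
      using pB_nonneg[OF assms(1,2)] pB_remainder_lt spread(1) by auto
    consider (full) b d where "y = t * s + thetap s t * b + d"
        "d \<in> {0..tau s t - z}" "b \<in> {0..?p - 1}"
      | (last) v where "y = t * s + thetap s t * ?p + v"
        "v \<in> {0..z - 1 - ?p * (tau s t - z + 1)}"
      using assms(3) spread unfolding PSB_def by auto
    then show thesis
    proof cases
      case full
      then show thesis
        using that by auto
    next
      case last
      then show thesis
        using that[OF last(1)] p by auto
    qed
  next
    case bottom
    then obtain v where "y = t * s + thetap s t * 0 + v" and "v \<in> {0..z - 1}"
      using assms(3) unfolding PSB_def by auto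
    then show thesis
      using that[of 0] bottom by auto
  qed
qed

lemma target_notin_PSA_PCB:
  fixes s t z i l :: int
  assumes "1 \<le> s" and "1 \<le> t" and "1 \<le> z" and "0 \<le> i" and "i < t" and "l \<le> t - 1"
  shows "t * s - t + i + thetap s t * l \<notin> setplus (PSA s t z) (PCB s t)"
proof
  assume "t * s - t + i + thetap s t * l \<in> setplus (PSA s t z) (PCB s t)"
  then obtain y y' where y: "y \<in> PSA s t z" and y': "y' \<in> PCB s t"
    and sum: "t * s - t + i + thetap s t * l = y + y'"
    by (rule mem_setplusE)
  obtain a w where a: "y = t * s + thetap s t * a + w" "0 \<le> a" "0 \<le> w"
    "w < t * s - t \<or> a = t - 1"
    using PSA_memE[OF assms(1-3) y] by blast
  obtain m k where m: "y' = m + thetap s t * k" "0 \<le> m" "m \<le> t * s - t" "0 \<le> k"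
    using PCB_memE[OF assms(2) y'] by blast
  have "t * s - t + i + thetap s t * l = (t * s + w + m) + thetap s t * (a + k)"
    using sum a(1) m(1) by (simp add: algebra_simps)
  moreover have "t * s - t + i < t * s + w + m"
    using assms(5) a(3) m(2) by linarith
  ultimately have "a + k < l" and reach: "t * s - t + i + thetap s t \<le> t * s + w + m"
    using offset_lt_imp_carry[OF thetap_pos[OF assms(1,2)]] by blast+
  then have "w < t * s - t"
    using a(4) m(4) assms(6) by auto
  then show False
    using reach m(3) assms(4) thetap_eq[of s t] by linarith
qed

lemma target_notin_PSA_PSB:
  fixes s t z i l :: int
  assumes "1 \<le> s" and "1 \<le> t" and "1 \<le> z" and "0 \<le> i" and "i < t" and "l \<le> t - 1"
  shows "t * s - t + i + thetap s t * l \<notin> setplus (PSA s t z) (PSB s t z)"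
proof
  assume "t * s - t + i + thetap s t * l \<in> setplus (PSA s t z) (PSB s t z)"
  then obtain y y' where y: "y \<in> PSA s t z" and y': "y' \<in> PSB s t z"
    and sum: "t * s - t + i + thetap s t * l = y + y'"
    by (rule mem_setplusE)
  obtain a w where a: "y = t * s + thetap s t * a + w" "0 \<le> a" "0 \<le> w" "w < z"
    using PSA_memE[OF assms(1-3) y] by blast
  obtain b d where b: "y' = t * s + thetap s t * b + d" "0 \<le> b" "0 \<le> d"
    "b = t - 1 \<or> d \<le> tau s t - z"
    using PSB_memE[OF assms(2,3) y'] by blast
  have "t * s - t + i + thetap s t * l = (2 * (t * s) + w + d) + thetap s t * (a + b)"
    using sum a(1) b(1) by (simp add: algebra_simps)
  moreover have "0 \<le> t * s"
    using assms(1,2) by simp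
  then have "t * s - t + i < 2 * (t * s) + w + d"
    using assms(5) a(3) b(3) by linarith
  ultimately have "a + b < l" and reach: "t * s - t + i + thetap s t \<le> 2 * (t * s) + w + d"
    using offset_lt_imp_carry[OF thetap_pos[OF assms(1,2)]] by blast+
  then have "d \<le> tau s t - z"
    using b(4) a(2) assms(6) by auto
  then show False
    using reach a(4) assms(4) thetap_eq[of s t] tau_eq[of s t] by linarith
qed

lemma target_notin_PSB_PCA:
  fixes s t z i l :: int
  assumes "1 \<le> s" and "1 \<le> t" and "1 \<le> z" and "0 \<le> i" and "i < t" and "l \<le> t - 1"
  shows "t * s - t + i + thetap s t * l \<notin> setplus (PSB s t z) (PCA s t)"
proof
  assume "t * s - t + i + thetap s t * l \<in> setplus (PSB s t z) (PCA s t)"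
  then obtain y y' where y: "y \<in> PSB s t z" and y': "y' \<in> PCA s t"
    and sum: "t * s - t + i + thetap s t * l = y + y'"
    by (rule mem_setplusE)
  obtain b d where b: "y = t * s + thetap s t * b + d" "0 \<le> b" "0 \<le> d"
    "b = t - 1 \<or> d \<le> tau s t - z"
    using PSB_memE[OF assms(2,3) y] by blast
  have c: "0 \<le> y'" "y' < t * s"
    using PCA_bounds[OF assms(2) y'] by auto
  have "t * s - t + i + thetap s t * l = (t * s + d + y') + thetap s t * b"
    using sum b(1) by (simp add: algebra_simps)
  moreover have "t * s - t + i < t * s + d + y'"
    using assms(5) b(3) c(1) by linarith
  ultimately have "b < l" and reach: "t * s - t + i + thetap s t \<le> t * s + d + y'"
    using offset_lt_imp_carry[OF thetap_pos[OF assms(1,2)]] by blast+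
  then have "d \<le> tau s t - z"
    using b(4) assms(6) by auto
  then show False
    using reach c(2) assms(3,4) thetap_eq[of s t] tau_eq[of s t] by linarith
qed

theorem theorem1:
  fixes s t z i l :: int
  assumes "s \<ge> 1" and "t \<ge> 1" and "z \<ge> 1"
    and "i \<in> {0..t-1}" and "l \<in> {0..t-1}"
  shows "i + t * (s - 1) + t * l * (2 * s - 1) \<notin> setplus (PSA s t z) (PCB s t)
       \<and> i + t * (s - 1) + t * l * (2 * s - 1) \<notin> setplus (PSA s t z) (PSB s t z)
       \<and> i + t * (s - 1) + t * l * (2 * s - 1) \<notin> setplus (PSB s t z) (PCA s t)"
proof -
  have target: "i + t * (s - 1) + t * l * (2 * s - 1) = t * s - t + i + thetap s t * l"
    by (simp add: thetap_def algebra_simps)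
  have i: "0 \<le> i" "i < t" and l: "l \<le> t - 1"
    using assms(4,5) by auto
  show ?thesis
    unfolding target
    using target_notin_PSA_PCB[OF assms(1-3) i l] target_notin_PSA_PSB[OF assms(1-3) i l]
      target_notin_PSB_PCA[OF assms(1-3) i l]
    by blast
qed

end
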